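(* Let $K$ be a field. The characteristic function $\mathbb Z^k\to K$ of a polyhedral region in $\mathbb Z^k$ is a hypergeometric term on $\mathbb Z^k$.
   Context: A half-space is $\{\vec z\in\mathbb Z^k:\vec v\cdot\vec z>n\}$ with $\vec v\in\mathbb Z^k$, $n\in\mathbb Z$. A polyhedral region is either $\mathbb Z^k$ or an intersection of finitely many half-spaces. A hypergeometric term on $\mathbb Z^k$ over $K$ is a function $f\colon\mathbb Z^k\to K$ such that for each $i\in\{1,\dots,k\}$ there are nonzero polynomials $A_i,B_i\in K[\vec z]$ with $A_i(\vec z)f(\vec z)=B_i(\vec z)f(\vec z+\vec e_i)$ for all $\vec z\in\mathbb Z^k$. *)

theory Defs
  imports "HOL-Analysis.Analysis" "HOL-Library.Poly_Mapping"
begin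

text \<open>Z^k is modelled as int ^ 'k for a finite index type 'k (k = CARD('k)).\<close>

type_synonym ('k, 'a) mpoly_fs = "('k \<Rightarrow>\<^sub>0 nat) \<Rightarrow>\<^sub>0 'a"

definition mpoly_eval :: "('k::finite, 'a::field) mpoly_fs \<Rightarrow> int ^ 'k \<Rightarrow> 'a" where
  "mpoly_eval p z = (\<Sum>m\<in>Poly_Mapping.keys p. Poly_Mapping.lookup p m * (\<Prod>i\<in>UNIV. (of_int (z $ i)) ^ Poly_Mapping.lookup (m :: 'k \<Rightarrow>\<^sub>0 nat) i))"

definition int_dot :: "int ^ 'k::finite \<Rightarrow> int ^ 'k \<Rightarrow> int" where
  "int_dot v z = (\<Sum>i\<in>UNIV. v $ i * z $ i)"

definition half_space :: "int ^ 'k::finite \<Rightarrow> int \<Rightarrow> (int ^ 'k) set" where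
  "half_space v n = {z. int_dot v z > n}"

definition polyhedral_region :: "(int ^ 'k::finite) set \<Rightarrow> bool" where
  "polyhedral_region R \<longleftrightarrow> R = UNIV \<or>
     (\<exists>H. finite H \<and> R = (\<Inter>(v, n)\<in>H. half_space v n))"

definition unit_vec :: "'k::finite \<Rightarrow> int ^ 'k" where
  "unit_vec i = axis i 1"

definition hypergeometric_term :: "(int ^ 'k::finite \<Rightarrow> 'a::field) \<Rightarrow> bool" where
  "hypergeometric_term f \<longleftrightarrow>
     (\<forall>i. \<exists>A B :: ('k, 'a) mpoly_fs. A \<noteq> 0 \<and> B \<noteq> 0 \<and>
        (\<forall>z. mpoly_eval A z * f z = mpoly_eval B z * f (z + unit_vec i)))"

definition char_fun :: "(int ^ 'k::finite) set \<Rightarrow> int ^ 'k \<Rightarrow> 'a::field" where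
  "char_fun R z = (if z \<in> R then 1 else 0)"

end

theory Submission imports Defs "HOL-Computational_Algebra.Primes" begin

text \<open>For the characteristic function \<open>f\<close> of \<open>R\<close> and a direction \<open>e\<^sub>i\<close> it suffices to find one
  nonzero polynomial \<open>P\<close> vanishing wherever \<open>f z \<noteq> f (z + e\<^sub>i)\<close>, and to take \<open>A = B = P\<close>.
  In characteristic \<open>p > 0\<close>, \<open>P = x\<^sub>i\<^sup>p - x\<^sub>i\<close> vanishes on all of \<open>\<int>\<^sup>k\<close> by Fermat's little theorem.
  In characteristic \<open>0\<close>, a step from \<open>z\<close> to \<open>z + e\<^sub>i\<close> leaves or enters \<open>R\<close> only by crossing the
  boundary of some half-space \<open>v \<cdot> z > n\<close> with \<open>v\<^sub>i \<noteq> 0\<close>, which forces \<open>\<bar>v \<cdot> z - n\<bar> \<le> \<bar>v\<^sub>i\<bar>\<close>;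
  so \<open>P\<close> can be taken as the product of the finitely many affine forms \<open>v \<cdot> z - c\<close> with
  \<open>\<bar>c - n\<bar> \<le> \<bar>v\<^sub>i\<bar>\<close>, which is nonzero since it does not vanish at a far point of the \<open>x\<^sub>i\<close>-axis.\<close>

definition monomial_eval :: "('k::finite \<Rightarrow>\<^sub>0 nat) \<Rightarrow> int ^ 'k \<Rightarrow> 'a::field" where
  "monomial_eval m z = (\<Prod>i\<in>UNIV. (of_int (z $ i)) ^ Poly_Mapping.lookup m i)"

lemma monomial_eval_add: "monomial_eval (m + n) z = monomial_eval m z * monomial_eval n z"
  by (simp add: monomial_eval_def lookup_add power_add prod.distrib)

lemma monomial_eval_single: "monomial_eval (Poly_Mapping.single j n) z = of_int (z $ j) ^ n"
proof -
  have "monomial_eval (Poly_Mapping.single j n) z = (\<Prod>i\<in>UNIV. if i = j then of_int (z $ j) ^ n else 1)"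
    unfolding monomial_eval_def by (intro prod.cong) (auto simp: lookup_single)
  thus ?thesis by simp
qed

lemma mpoly_eval_superset:
  assumes "finite S" "Poly_Mapping.keys p \<subseteq> S"
  shows "mpoly_eval p z = (\<Sum>m\<in>S. Poly_Mapping.lookup p m * monomial_eval m z)"
  unfolding mpoly_eval_def monomial_eval_def
  by (rule sum.mono_neutral_left) (use assms in \<open>auto simp: in_keys_iff\<close>)

lemma mpoly_eval_zero: "mpoly_eval 0 z = 0"
  by (simp add: mpoly_eval_def)

lemma mpoly_eval_single: "mpoly_eval (Poly_Mapping.single m c) z = c * monomial_eval m z"
  by (subst mpoly_eval_superset[of "{m}"]) auto

lemma mpoly_eval_add: "mpoly_eval (p + q) z = mpoly_eval p z + mpoly_eval q z"
proof -
  let ?S = "Poly_Mapping.keys p \<union> Poly_Mapping.keys q"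
  have "mpoly_eval (p + q) z = (\<Sum>m\<in>?S. Poly_Mapping.lookup (p + q) m * monomial_eval m z)"
    by (rule mpoly_eval_superset) (auto dest: subsetD[OF keys_add])
  also have "\<dots> = (\<Sum>m\<in>?S. Poly_Mapping.lookup p m * monomial_eval m z)
                  + (\<Sum>m\<in>?S. Poly_Mapping.lookup q m * monomial_eval m z)"
    by (simp add: lookup_add distrib_right sum.distrib)
  also have "\<dots> = mpoly_eval p z + mpoly_eval q z"
    by (subst (1 2) mpoly_eval_superset[of ?S]) auto
  finally show ?thesis .
qed

lemma mpoly_eval_sum: "finite A \<Longrightarrow> mpoly_eval (sum f A) z = (\<Sum>a\<in>A. mpoly_eval (f a) z)"
  by (induction A rule: finite_induct) (auto simp: mpoly_eval_zero mpoly_eval_add)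

lemma mpoly_eval_uminus: "mpoly_eval (- p) z = - mpoly_eval p z"
  using mpoly_eval_add[of p "- p" z] by (simp add: mpoly_eval_zero add_eq_0_iff)

lemma mpoly_eval_diff: "mpoly_eval (p - q) z = mpoly_eval p z - mpoly_eval q z"
  using mpoly_eval_add[of p "- q" z] by (simp add: mpoly_eval_uminus)

lemma poly_mapping_sum_single:
  "p = (\<Sum>m\<in>Poly_Mapping.keys p. Poly_Mapping.single m (Poly_Mapping.lookup p m))"
  by (rule poly_mapping_eqI) (simp add: lookup_sum lookup_single when_def in_keys_iff sum.delta')

lemma mpoly_eval_mult: "mpoly_eval (p * q) z = mpoly_eval p z * mpoly_eval q z"
proof -
  let ?c = Poly_Mapping.lookup
  have "p * q = (\<Sum>m\<in>Poly_Mapping.keys p. Poly_Mapping.single m (?c p m))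
              * (\<Sum>n\<in>Poly_Mapping.keys q. Poly_Mapping.single n (?c q n))"
    using poly_mapping_sum_single[of p] poly_mapping_sum_single[of q] by simp
  also have "\<dots> = (\<Sum>m\<in>Poly_Mapping.keys p. \<Sum>n\<in>Poly_Mapping.keys q.
                    Poly_Mapping.single (m + n) (?c p m * ?c q n))"
    by (simp add: sum_product mult_single)
  finally have "mpoly_eval (p * q) z = (\<Sum>m\<in>Poly_Mapping.keys p. \<Sum>n\<in>Poly_Mapping.keys q.
                  ?c p m * ?c q n * (monomial_eval m z * monomial_eval n z))"
    by (simp add: mpoly_eval_sum mpoly_eval_single monomial_eval_add)
  also have "\<dots> = mpoly_eval p z * mpoly_eval q z"
    by (subst (1 2) mpoly_eval_superset[OF finite_keys order_refl]) (simp add: sum_product algebra_simps)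
  finally show ?thesis .
qed

lemma mpoly_eval_prod: "finite A \<Longrightarrow> mpoly_eval (prod f A) z = (\<Prod>a\<in>A. mpoly_eval (f a) z)"
  by (induction A rule: finite_induct)
     (auto simp: mpoly_eval_mult mpoly_eval_single monomial_eval_def simp flip: single_one)

definition affine_form :: "int ^ 'k::finite \<Rightarrow> int \<Rightarrow> ('k, 'a::field) mpoly_fs" where
  "affine_form v c =
     (\<Sum>j\<in>UNIV. Poly_Mapping.single (Poly_Mapping.single j 1) (of_int (v $ j))) - Poly_Mapping.single 0 (of_int c)"

lemma mpoly_eval_affine_form:
  "mpoly_eval (affine_form v c :: ('k::finite, 'a::field) mpoly_fs) z = of_int (int_dot v z - c)"
proof -
  have "mpoly_eval (Poly_Mapping.single 0 (of_int c) :: ('k, 'a) mpoly_fs) z = of_int c"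
    by (subst mpoly_eval_single) (simp add: monomial_eval_def)
  thus ?thesis
    unfolding affine_form_def mpoly_eval_diff
    by (simp add: mpoly_eval_sum mpoly_eval_single monomial_eval_single int_dot_def)
qed

lemma int_dot_add_unit_vec: "int_dot v (z + unit_vec i) = int_dot v z + v $ i"
proof -
  have "int_dot v (z + unit_vec i) = (\<Sum>j\<in>UNIV. v $ j * z $ j + (if j = i then v $ i else 0))"
    unfolding int_dot_def unit_vec_def by (intro sum.cong) (auto simp: axis_def algebra_simps)
  thus ?thesis by (simp add: sum.distrib int_dot_def)
qed

lemma int_dot_axis: "int_dot v (axis i t) = v $ i * t"
  unfolding int_dot_def axis_def by (simp add: if_distrib cong: if_cong)

lemma prod_affine_forms_nonzero:
  assumes "CHAR('a::field) = 0" "finite G" "\<And>v c. (v, c) \<in> G \<Longrightarrow> v $ i \<noteq> 0"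
  shows "(\<Prod>(v, c)\<in>G. affine_form v c :: ('k::finite, 'a) mpoly_fs) \<noteq> 0"
proof -
  have of_int_inj: "(of_int x :: 'a) = of_int y \<longleftrightarrow> x = y" for x y
    using of_int_eq_0_iff_char_dvd[of "x - y", where 'a='a] assms(1) by (simp del: of_int_eq_iff)
  define t where "t = 1 + (\<Sum>(v, c)\<in>G. \<bar>c\<bar>)"
  have "int_dot v (axis i t) \<noteq> c" if vc: "(v, c) \<in> G" for v c
  proof -
    have "(\<lambda>(v, c). \<bar>c\<bar>) (v, c) \<le> (\<Sum>x\<in>G. (\<lambda>(v, c). \<bar>c\<bar>) x)"
      by (rule member_le_sum[OF vc]) (auto simp: assms(2))
    hence "\<bar>c\<bar> < t" by (simp add: t_def case_prod_beta)
    also have "t \<le> \<bar>v $ i\<bar> * t"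
    proof -
      have "1 \<le> \<bar>v $ i\<bar>" using assms(3)[OF vc] by linarith
      thus ?thesis using mult_right_mono[of 1 "\<bar>v $ i\<bar>" t] \<open>\<bar>c\<bar> < t\<close> by simp
    qed
    finally show ?thesis by (auto simp: int_dot_axis abs_mult)
  qed
  hence "mpoly_eval (\<Prod>(v, c)\<in>G. affine_form v c :: ('k, 'a) mpoly_fs) (axis i t) \<noteq> 0"
    using assms(2) by (auto simp: mpoly_eval_prod case_prod_beta mpoly_eval_affine_form of_int_inj)
  thus ?thesis by (auto simp: mpoly_eval_zero)
qed

lemma hypergeometric_termI_vanishing:
  fixes f :: "int ^ 'k::finite \<Rightarrow> 'a::field"
  assumes "\<And>i. \<exists>P :: ('k, 'a) mpoly_fs. P \<noteq> 0 \<and>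
              (\<forall>z. f z \<noteq> f (z + unit_vec i) \<longrightarrow> mpoly_eval P z = 0)"
  shows "hypergeometric_term f"
  unfolding hypergeometric_term_def
proof
  fix i
  obtain P :: "('k, 'a) mpoly_fs"
    where "P \<noteq> 0" and P: "\<And>z. f z \<noteq> f (z + unit_vec i) \<Longrightarrow> mpoly_eval P z = 0"
    using assms[of i] by blast
  have "mpoly_eval P z * f z = mpoly_eval P z * f (z + unit_vec i)" for z
    using P[of z] by (cases "f z = f (z + unit_vec i)") simp_all
  with \<open>P \<noteq> 0\<close> show "\<exists>A B :: ('k, 'a) mpoly_fs. A \<noteq> 0 \<and> B \<noteq> 0 \<and>
      (\<forall>z. mpoly_eval A z * f z = mpoly_eval B z * f (z + unit_vec i))"
    by blast
qed

lemma of_nat_power_prime_CHAR: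
  assumes "prime CHAR('a::field)"
  shows "(of_nat m :: 'a) ^ CHAR('a) = of_nat m"
proof (induction m)
  case 0
  thus ?case using prime_gt_0_nat[OF assms] by (simp add: power_0_left)
next
  case (Suc m)
  have "(of_nat (Suc m) :: 'a) ^ CHAR('a) = (of_nat m + 1) ^ CHAR('a)"
    by (simp add: add.commute)
  also have "\<dots> = of_nat m ^ CHAR('a) + 1 ^ CHAR('a)"
    by (rule freshmans_dream) (use assms in auto)
  finally show ?case using Suc by (simp add: add.commute)
qed

lemma of_int_power_prime_CHAR:
  assumes "prime CHAR('a::field)"
  shows "(of_int x :: 'a) ^ CHAR('a) = of_int x"
proof (cases "x \<ge> 0")
  case True
  hence "(of_int x :: 'a) = of_nat (nat x)" by simp
  thus ?thesis using of_nat_power_prime_CHAR[OF assms] by simp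
next
  case False
  hence "(of_int x :: 'a) = - of_nat (nat (- x))" by simp
  thus ?thesis using of_nat_power_prime_CHAR[OF assms] minus_power_prime_CHAR[OF refl assms] by simp
qed

lemma vanishing_mpoly_CHAR_pos:
  assumes "CHAR('a::field) \<noteq> 0"
  shows "\<exists>P :: ('k::finite, 'a) mpoly_fs. P \<noteq> 0 \<and> (\<forall>z. mpoly_eval P z = 0)"
proof -
  fix i :: 'k
  let ?p = "CHAR('a)"
  have p: "prime ?p" using assms by (intro prime_CHAR_semidom) simp
  define P :: "('k, 'a) mpoly_fs" where
    "P = Poly_Mapping.single (Poly_Mapping.single i ?p) 1 - Poly_Mapping.single (Poly_Mapping.single i 1) 1"
  have "Poly_Mapping.single i ?p \<noteq> Poly_Mapping.single i (1::nat)"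
    using p by (metis lookup_single_eq not_prime_1)
  hence "Poly_Mapping.lookup P (Poly_Mapping.single i ?p) = 1"
    by (simp add: P_def lookup_minus lookup_single)
  hence "P \<noteq> 0" by auto
  moreover have "mpoly_eval P z = 0" for z
    unfolding P_def mpoly_eval_diff mpoly_eval_single monomial_eval_single
    using of_int_power_prime_CHAR[OF p] by simp
  ultimately show ?thesis by blast
qed

definition crossing_forms :: "((int ^ 'k::finite) \<times> int) set \<Rightarrow> 'k \<Rightarrow> ((int ^ 'k) \<times> int) set" where
  "crossing_forms H i = {(v, c). \<exists>n. (v, n) \<in> H \<and> v $ i \<noteq> 0 \<and> \<bar>c - n\<bar> \<le> \<bar>v $ i\<bar>}"

lemma finite_crossing_forms:
  assumes "finite H"
  shows "finite (crossing_forms H i)"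
proof (rule finite_subset)
  show "crossing_forms H i \<subseteq> (\<Union>(v, n)\<in>H. {v} \<times> {n - \<bar>v $ i\<bar> .. n + \<bar>v $ i\<bar>})"
    unfolding crossing_forms_def by (force simp: abs_le_iff)
  show "finite (\<Union>(v, n)\<in>H. {v} \<times> {n - \<bar>v $ i\<bar> .. n + \<bar>v $ i\<bar>})"
    using assms by auto
qed

lemma crossing_form_at_step:
  assumes "(z \<in> (\<Inter>(v, n)\<in>H. half_space v n)) \<noteq> (z + unit_vec i \<in> (\<Inter>(v, n)\<in>H. half_space v n))"
  shows "\<exists>v. (v, int_dot v z) \<in> crossing_forms H i"
proof -
  obtain v n where "(v, n) \<in> H" "(int_dot v z > n) \<noteq> (int_dot v z + v $ i > n)"
    using assms by (fastforce simp: half_space_def int_dot_add_unit_vec case_prod_beta)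
  hence "(v, int_dot v z) \<in> crossing_forms H i"
    unfolding crossing_forms_def by auto
  thus ?thesis ..
qed

lemma vanishing_mpoly_CHAR_0:
  assumes "CHAR('a::field) = 0" "finite H" "R = (\<Inter>(v, n)\<in>H. half_space v n)"
  shows "\<exists>P :: ('k::finite, 'a) mpoly_fs. P \<noteq> 0 \<and>
           (\<forall>z. (char_fun R z :: 'a) \<noteq> char_fun R (z + unit_vec i) \<longrightarrow> mpoly_eval P z = 0)"
proof (intro exI conjI allI impI)
  let ?G = "crossing_forms H i"
  have fin: "finite ?G" by (rule finite_crossing_forms[OF assms(2)])
  show "(\<Prod>(v, c)\<in>?G. affine_form v c :: ('k, 'a) mpoly_fs) \<noteq> 0"
    using fin by (rule prod_affine_forms_nonzero[OF assms(1)]) (auto simp: crossing_forms_def)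
  fix z
  assume "(char_fun R z :: 'a) \<noteq> char_fun R (z + unit_vec i)"
  then obtain v where "(v, int_dot v z) \<in> ?G"
    using crossing_form_at_step[of z H i] assms(3) by (auto simp: char_fun_def split: if_splits)
  thus "mpoly_eval (\<Prod>(v, c)\<in>?G. affine_form v c :: ('k, 'a) mpoly_fs) z = 0"
    unfolding mpoly_eval_prod[OF fin]
    by (intro prod_zero[OF fin] bexI[of _ "(v, int_dot v z)"]) (simp_all add: mpoly_eval_affine_form)
qed

lemma polyhedral_regionE:
  assumes "polyhedral_region R"
  obtains H where "finite H" "R = (\<Inter>(v, n)\<in>H. half_space v n)"
  using assms unfolding polyhedral_region_def
  by (metis INF_empty finite.emptyI)

theorem lemmaB20:
  fixes R :: "(int ^ 'k::finite) set"
  assumes "polyhedral_region R"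
  shows "hypergeometric_term (char_fun R :: int ^ 'k \<Rightarrow> 'a::field)"
proof (rule hypergeometric_termI_vanishing)
  fix i :: 'k
  obtain H where "finite H" "R = (\<Inter>(v, n)\<in>H. half_space v n)"
    using polyhedral_regionE[OF assms] .
  show "\<exists>P :: ('k, 'a) mpoly_fs. P \<noteq> 0 \<and>
          (\<forall>z. (char_fun R z :: 'a) \<noteq> char_fun R (z + unit_vec i) \<longrightarrow> mpoly_eval P z = 0)"
  proof (cases "CHAR('a) = 0")
    case True
    show ?thesis by (rule vanishing_mpoly_CHAR_0[OF True \<open>finite H\<close> \<open>R = _\<close>])
  next
    case False
    thus ?thesis using vanishing_mpoly_CHAR_pos by blast
  qed
qed

end
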